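(* A hypergraph $H$ is quasi-eulerian if and only if it admits a decomposition into cycles, i.e., a family of cycles of $H$ such that every edge of $H$ is traversed by exactly one cycle of the family.
   Context: A hypergraph $H=(V,E)$ consists of a finite nonempty vertex set $V$, a finite edge set $E$ disjoint from $V$, and an incidence function assigning to each edge $e\in E$ a subset of $V$ (also denoted $e$); distinct edges may have the same vertex set. Hypergraphs are assumed to have no empty edges. A walk is a sequence $W=v_0e_1v_1e_2\cdots e_kv_k$ with $v_i\in V$, $e_i\in E$, such that for each $i$, $v_{i-1}\ne v_i$ and $v_{i-1},v_i\in e_i$; the $v_i$ are its anchors. $W$ is closed if $k\ge 2$ and $v_0=v_k$; it is a strict trail if $e_1,\dots,e_k$ are pairwise distinct. A cycle is a closed walk $v_0e_1v_1\cdots e_kv_0$ in which $v_0,\dots,v_{k-1}$ are pairwise distinct and $e_1,\dots,e_k$ are pairwise distinct. An Euler family of $H$ is a family of closed strict trails such that every edge of $H$ lies in exactly one trail and no two trails have a common anchor; $H$ is quasi-eulerian if it has one. *)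

theory Defs
  imports Main
begin

text \<open>A hypergraph is given by a vertex set V (of type 'v), an edge set E (of type 'e;
  V and E are disjoint since they live in different types) and an incidence function inc.\<close>

definition hypergraph :: "'v set \<Rightarrow> 'e set \<Rightarrow> ('e \<Rightarrow> 'v set) \<Rightarrow> bool" where
  "hypergraph V E inc \<longleftrightarrow> finite V \<and> V \<noteq> {} \<and> finite E \<and>
     (\<forall>e\<in>E. inc e \<noteq> {} \<and> inc e \<subseteq> V)"

text \<open>A walk v0 e1 v1 ... ek vk is represented by the pair (vertex list [v0..vk], edge list [e1..ek]).\<close>

type_synonym ('v, 'e) walk = "'v list \<times> 'e list"

definition walk :: "'v set \<Rightarrow> 'e set \<Rightarrow> ('e \<Rightarrow> 'v set) \<Rightarrow> ('v, 'e) walk \<Rightarrow> bool" where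
  "walk V E inc W \<longleftrightarrow> (let vs = fst W; es = snd W in
     length vs = length es + 1 \<and> set vs \<subseteq> V \<and> set es \<subseteq> E \<and>
     (\<forall>i < length es. vs ! i \<noteq> vs ! Suc i \<and> vs ! i \<in> inc (es ! i) \<and> vs ! Suc i \<in> inc (es ! i)))"

definition anchors :: "('v, 'e) walk \<Rightarrow> 'v set" where
  "anchors W = set (fst W)"

definition walk_edges :: "('v, 'e) walk \<Rightarrow> 'e set" where
  "walk_edges W = set (snd W)"

definition closed_walk :: "'v set \<Rightarrow> 'e set \<Rightarrow> ('e \<Rightarrow> 'v set) \<Rightarrow> ('v, 'e) walk \<Rightarrow> bool" where
  "closed_walk V E inc W \<longleftrightarrow> walk V E inc W \<and> length (snd W) \<ge> 2 \<and> hd (fst W) = last (fst W)"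

definition strict_trail :: "'v set \<Rightarrow> 'e set \<Rightarrow> ('e \<Rightarrow> 'v set) \<Rightarrow> ('v, 'e) walk \<Rightarrow> bool" where
  "strict_trail V E inc W \<longleftrightarrow> walk V E inc W \<and> distinct (snd W)"

definition cycle :: "'v set \<Rightarrow> 'e set \<Rightarrow> ('e \<Rightarrow> 'v set) \<Rightarrow> ('v, 'e) walk \<Rightarrow> bool" where
  "cycle V E inc W \<longleftrightarrow> closed_walk V E inc W \<and> distinct (butlast (fst W)) \<and> distinct (snd W)"

definition euler_family :: "'v set \<Rightarrow> 'e set \<Rightarrow> ('e \<Rightarrow> 'v set) \<Rightarrow> ('v, 'e) walk set \<Rightarrow> bool" where
  "euler_family V E inc F \<longleftrightarrow>
     (\<forall>W\<in>F. closed_walk V E inc W \<and> strict_trail V E inc W) \<and>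
     (\<forall>e\<in>E. \<exists>!W. W \<in> F \<and> e \<in> walk_edges W) \<and>
     (\<forall>W\<in>F. \<forall>W'\<in>F. W \<noteq> W' \<longrightarrow> anchors W \<inter> anchors W' = {})"

definition quasi_eulerian :: "'v set \<Rightarrow> 'e set \<Rightarrow> ('e \<Rightarrow> 'v set) \<Rightarrow> bool" where
  "quasi_eulerian V E inc \<longleftrightarrow> (\<exists>F. euler_family V E inc F)"

definition cycle_decomposition :: "'v set \<Rightarrow> 'e set \<Rightarrow> ('e \<Rightarrow> 'v set) \<Rightarrow> ('v, 'e) walk set \<Rightarrow> bool" where
  "cycle_decomposition V E inc F \<longleftrightarrow>
     (\<forall>C\<in>F. cycle V E inc C) \<and> (\<forall>e\<in>E. \<exists>!C. C \<in> F \<and> e \<in> walk_edges C)"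

end

theory Submission
  imports Defs "HOL-Library.Disjoint_Sets"
begin

text \<open>
  If a closed strict trail visits
  an anchor twice, cutting it there yields two shorter closed strict trails whose edge sets
  partition the original one; by induction every closed strict trail, and hence every Euler
  family, decomposes into cycles. Conversely, two edge-disjoint closed strict trails through a
  common anchor can both be rotated to start there and then concatenated. Since the edge set is
  finite, a cycle decomposition is a finite family, and merging trails with a common anchor
  until none remain produces an Euler family.
\<close>

lemma last_append_tl:
  "xs \<noteq> [] \<Longrightarrow> ys \<noteq> [] \<Longrightarrow> last xs = hd ys \<Longrightarrow> last (xs @ tl ys) = last ys"
  by (cases ys) auto

lemma set_append_tl: "xs \<noteq> [] \<Longrightarrow> ys \<noteq> [] \<Longrightarrow> last xs = hd ys \<Longrightarrow> set (xs @ tl ys) = set xs \<union> set ys"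
  by (cases ys) auto

lemma disjoint_family_on_Un:
  "disjoint_family_on A I \<Longrightarrow> disjoint_family_on A J \<Longrightarrow> (\<Union>i\<in>I. A i) \<inter> (\<Union>j\<in>J. A j) = {} \<Longrightarrow>
   disjoint_family_on A (I \<union> J)"
  unfolding disjoint_family_on_def by blast

lemma disjoint_family_on_UN_refine:
  assumes "disjoint_family_on A I"
    and "\<And>i. i \<in> I \<Longrightarrow> disjoint_family_on B (C i)" "\<And>i. i \<in> I \<Longrightarrow> (\<Union>c\<in>C i. B c) \<subseteq> A i"
  shows "disjoint_family_on B (\<Union>i\<in>I. C i)"
  unfolding disjoint_family_on_def
proof (intro ballI impI)
  fix c d assume "c \<in> (\<Union>i\<in>I. C i)" "d \<in> (\<Union>i\<in>I. C i)" "c \<noteq> d"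
  then obtain i j where ij: "i \<in> I" "c \<in> C i" "j \<in> I" "d \<in> C j" by blast
  show "B c \<inter> B d = {}"
  proof (cases "i = j")
    case True
    then show ?thesis using assms(2) ij \<open>c \<noteq> d\<close> by (auto dest: disjoint_family_onD)
  next
    case False
    then have "A i \<inter> A j = {}" using assms(1) ij by (auto dest: disjoint_family_onD)
    then show ?thesis using assms(3)[of i] assms(3)[of j] ij by blast
  qed
qed

lemma unique_cover_iff_disjoint_family:
  assumes "\<forall>X\<in>F. A X \<subseteq> S"
  shows "(\<forall>x\<in>S. \<exists>!X. X \<in> F \<and> x \<in> A X) \<longleftrightarrow> (\<Union>X\<in>F. A X) = S \<and> disjoint_family_on A F"
proof
  assume unique: "\<forall>x\<in>S. \<exists>!X. X \<in> F \<and> x \<in> A X"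
  have "S \<subseteq> (\<Union>X\<in>F. A X)"
  proof
    fix x assume "x \<in> S"
    with unique obtain X where "X \<in> F" "x \<in> A X" by metis
    then show "x \<in> (\<Union>X\<in>F. A X)" by blast
  qed
  moreover have "disjoint_family_on A F"
    unfolding disjoint_family_on_def
  proof (intro ballI impI equals0I)
    fix X Y x assume "X \<in> F" "Y \<in> F" "X \<noteq> Y" "x \<in> A X \<inter> A Y"
    moreover have "x \<in> S" using assms \<open>X \<in> F\<close> \<open>x \<in> A X \<inter> A Y\<close> by blast
    ultimately show False using unique by (metis IntE)
  qed
  ultimately show "(\<Union>X\<in>F. A X) = S \<and> disjoint_family_on A F"
    using assms by blast
next
  assume cover: "(\<Union>X\<in>F. A X) = S \<and> disjoint_family_on A F"
  show "\<forall>x\<in>S. \<exists>!X. X \<in> F \<and> x \<in> A X"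
  proof
    fix x assume "x \<in> S"
    then obtain X where "X \<in> F" "x \<in> A X" using cover by blast
    then show "\<exists>!X. X \<in> F \<and> x \<in> A X"
      using cover by (intro ex1I[of _ X]) (auto dest: disjoint_family_onD)
  qed
qed

fun walk_seq :: "('e \<Rightarrow> 'v set) \<Rightarrow> 'v list \<Rightarrow> 'e list \<Rightarrow> bool" where
  "walk_seq inc [v] [] \<longleftrightarrow> True"
| "walk_seq inc (v # w # vs) (e # es) \<longleftrightarrow> v \<noteq> w \<and> v \<in> inc e \<and> w \<in> inc e \<and> walk_seq inc (w # vs) es"
| "walk_seq inc _ _ \<longleftrightarrow> False"

lemma walk_seq_iff_nth:
  "walk_seq inc vs es \<longleftrightarrow> length vs = Suc (length es) \<and>
     (\<forall>i < length es. vs ! i \<noteq> vs ! Suc i \<and> vs ! i \<in> inc (es ! i) \<and> vs ! Suc i \<in> inc (es ! i))"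
proof (induction es arbitrary: vs)
  case Nil
  then show ?case by (cases vs; cases "tl vs") auto
next
  case (Cons e es)
  show ?case
  proof (cases vs)
    case (Cons v vs')
    then show ?thesis
      using Cons.IH by (cases vs') (auto simp: less_Suc_eq_0_disj)
  qed simp
qed

lemma walk_iff_walk_seq:
  "walk V E inc (vs, es) \<longleftrightarrow> walk_seq inc vs es \<and> set vs \<subseteq> V \<and> set es \<subseteq> E"
  unfolding walk_def walk_seq_iff_nth Let_def by auto

lemma walk_seq_length: "walk_seq inc vs es \<Longrightarrow> length vs = Suc (length es)"
  by (simp add: walk_seq_iff_nth)

lemma walk_seq_take: "walk_seq inc vs es \<Longrightarrow> i \<le> length es \<Longrightarrow> walk_seq inc (take (Suc i) vs) (take i es)"
  by (auto simp: walk_seq_iff_nth)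

lemma walk_seq_drop: "walk_seq inc vs es \<Longrightarrow> i \<le> length es \<Longrightarrow> walk_seq inc (drop i vs) (drop i es)"
  by (auto simp: walk_seq_iff_nth)

lemma walk_seq_append:
  "walk_seq inc vs es \<Longrightarrow> walk_seq inc vs' es' \<Longrightarrow> last vs = hd vs' \<Longrightarrow>
   walk_seq inc (vs @ tl vs') (es @ es')"
proof (induction inc vs es rule: walk_seq.induct)
  case (1 inc v)
  then show ?case by (cases vs') auto
qed auto

lemma closed_walk_seq_length:
  assumes "walk_seq inc vs es" "hd vs = last vs" "es \<noteq> []"
  shows "2 \<le> length es"
proof (rule ccontr)
  assume "\<not> 2 \<le> length es"
  with assms(3) obtain e where "es = [e]" by (cases es; cases "tl es") auto
  with assms(1,2) show False
    by (cases vs; cases "tl vs"; cases "tl (tl vs)") auto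
qed

definition closed_trail :: "'v set \<Rightarrow> 'e set \<Rightarrow> ('e \<Rightarrow> 'v set) \<Rightarrow> ('v, 'e) walk \<Rightarrow> bool" where
  "closed_trail V E inc W \<longleftrightarrow> closed_walk V E inc W \<and> strict_trail V E inc W"

lemma closed_trail_iff:
  "closed_trail V E inc (vs, es) \<longleftrightarrow>
     walk_seq inc vs es \<and> set vs \<subseteq> V \<and> set es \<subseteq> E \<and> distinct es \<and> es \<noteq> [] \<and> hd vs = last vs"
  unfolding closed_trail_def closed_walk_def strict_trail_def walk_iff_walk_seq
  using closed_walk_seq_length by fastforce

lemma cycle_iff_closed_trail:
  "cycle V E inc W \<longleftrightarrow> closed_trail V E inc W \<and> distinct (butlast (fst W))"
  unfolding cycle_def closed_trail_def strict_trail_def closed_walk_def by auto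

lemma closed_trail_walk_edges:
  "closed_trail V E inc W \<Longrightarrow> walk_edges W \<subseteq> E \<and> walk_edges W \<noteq> {}"
  by (cases W) (simp add: closed_trail_iff walk_edges_def)

lemma closed_trail_rotate:
  assumes trail: "closed_trail V E inc (vs, es)" and "v \<in> set vs"
  obtains vs' es' where "closed_trail V E inc (vs', es')" "hd vs' = v"
    "set vs' = set vs" "set es' = set es"
proof -
  have walk: "walk_seq inc vs es" and closed: "hd vs = last vs" and "es \<noteq> []"
    using trail by (auto simp: closed_trail_iff)
  have len: "length vs = Suc (length es)"
    using walk_seq_length[OF walk] .
  obtain i where i: "i \<le> length es" "vs ! i = v"
    using \<open>v \<in> set vs\<close> len by (auto simp: in_set_conv_nth less_Suc_eq_le)
  define vs' where "vs' = drop i vs @ tl (take (Suc i) vs)"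
  have glue: "last (drop i vs) = hd (take (Suc i) vs)"
    using i(1) len closed by simp
  have "walk_seq inc vs' (drop i es @ take i es)"
    unfolding vs'_def by (rule walk_seq_append[OF walk_seq_drop[OF walk i(1)] walk_seq_take[OF walk i(1)] glue])
  moreover have "drop i es @ take i es = rotate i es"
    using i(1) by (cases "i = length es") (auto simp: rotate_drop_take)
  moreover have "set vs' = set vs"
  proof -
    have "set vs' = set (drop i vs) \<union> set (take (Suc i) vs)"
      unfolding vs'_def using i(1) len glue by (intro set_append_tl) auto
    also have "\<dots> = set vs"
    proof -
      have "set vs = set (take i vs) \<union> set (drop i vs)"
        by (metis append_take_drop_id set_append)
      moreover have "set (take i vs) \<subseteq> set (take (Suc i) vs)"
        by (simp add: set_take_subset_set_take)
      ultimately show ?thesis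
        using set_take_subset[of "Suc i" vs] set_drop_subset[of i vs] by blast
    qed
    finally show ?thesis .
  qed
  moreover have "hd vs' = v"
    unfolding vs'_def using i len by (simp add: hd_drop_conv_nth)
  moreover have "last vs' = v"
  proof -
    have "last vs' = last (take (Suc i) vs)"
      unfolding vs'_def using i(1) len glue by (intro last_append_tl) auto
    also have "\<dots> = v"
      using i len by (subst last_conv_nth) (auto simp: min_def)
    finally show ?thesis .
  qed
  ultimately show ?thesis
    using trail that[of vs' "rotate i es"] by (auto simp: closed_trail_iff)
qed

lemma closed_trail_merge:
  assumes "closed_trail V E inc W1" "closed_trail V E inc W2"
    and "walk_edges W1 \<inter> walk_edges W2 = {}" "anchors W1 \<inter> anchors W2 \<noteq> {}"
  obtains W where "closed_trail V E inc W"
    "anchors W = anchors W1 \<union> anchors W2" "walk_edges W = walk_edges W1 \<union> walk_edges W2"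
proof -
  obtain v where v: "v \<in> anchors W1" "v \<in> anchors W2"
    using assms(4) by blast
  obtain vs1 es1 where 1: "closed_trail V E inc (vs1, es1)" "hd vs1 = v"
    "set vs1 = anchors W1" "set es1 = walk_edges W1"
    using closed_trail_rotate[of V E inc "fst W1" "snd W1" v] assms(1) v(1)
    by (auto simp: anchors_def walk_edges_def)
  obtain vs2 es2 where 2: "closed_trail V E inc (vs2, es2)" "hd vs2 = v"
    "set vs2 = anchors W2" "set es2 = walk_edges W2"
    using closed_trail_rotate[of V E inc "fst W2" "snd W2" v] assms(2) v(2)
    by (auto simp: anchors_def walk_edges_def)
  have nonempty: "vs1 \<noteq> []" "vs2 \<noteq> []"
    using 1(1) 2(1) by (auto simp: closed_trail_iff dest: walk_seq_length)
  have glue: "last vs1 = hd vs2"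
    using 1 2 by (simp add: closed_trail_iff)
  have "closed_trail V E inc (vs1 @ tl vs2, es1 @ es2)"
    using 1 2 assms(3) nonempty glue walk_seq_append[of inc vs1 es1 vs2 es2]
      last_append_tl[of vs1 vs2] set_append_tl[of vs1 vs2]
    by (auto simp: closed_trail_iff)
  then show ?thesis
    using that 1 2 nonempty glue set_append_tl[of vs1 vs2]
    by (auto simp: anchors_def walk_edges_def)
qed

lemma closed_trail_split:
  assumes trail: "closed_trail V E inc (vs, es)"
    and ij: "i < j" "j < length es" "vs ! i = vs ! j"
  shows "closed_trail V E inc (drop i (take (Suc j) vs), drop i (take j es))"
    and "closed_trail V E inc (take (Suc i) vs @ tl (drop j vs), take i es @ drop j es)"
proof -
  have walk: "walk_seq inc vs es" and closed: "hd vs = last vs"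
    and sets: "set vs \<subseteq> V" "set es \<subseteq> E" "distinct es"
    using trail by (auto simp: closed_trail_iff)
  have len: "length vs = Suc (length es)"
    using walk_seq_length[OF walk] .
  let ?inner = "drop i (take (Suc j) vs)"
  have "walk_seq inc ?inner (drop i (take j es))"
    using walk_seq_drop[OF walk_seq_take[OF walk, of j]] ij by simp
  moreover have "hd ?inner = last ?inner"
  proof -
    have "hd ?inner = vs ! i"
      using ij len by (subst hd_drop_conv_nth) auto
    moreover have "last ?inner = last (take (Suc j) vs)"
      using ij len by (intro last_drop) auto
    moreover have "last (take (Suc j) vs) = vs ! j"
      using ij len by (subst last_conv_nth) (auto simp: min_def)
    ultimately show ?thesis
      using ij by simp
  qed
  moreover have "set ?inner \<subseteq> set vs" "set (drop i (take j es)) \<subseteq> set es"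
    by (meson order.trans set_drop_subset set_take_subset)+
  ultimately show "closed_trail V E inc (?inner, drop i (take j es))"
    using sets ij by (auto simp: closed_trail_iff)
  let ?outer = "take (Suc i) vs @ tl (drop j vs)"
  have glue: "last (take (Suc i) vs) = hd (drop j vs)"
    using ij len by (subst last_conv_nth) (auto simp: min_def hd_drop_conv_nth)
  have "walk_seq inc ?outer (take i es @ drop j es)"
    using walk_seq_append[OF walk_seq_take[OF walk] walk_seq_drop[OF walk] glue] ij by simp
  moreover have "hd ?outer = last ?outer"
  proof -
    have "hd ?outer = hd vs"
      using len by (cases vs) auto
    moreover have "last ?outer = last (drop j vs)"
      using ij len by (intro last_append_tl glue) auto
    moreover have "last (drop j vs) = last vs"
      using ij len by simp
    ultimately show ?thesis
      using closed by simp
  qed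
  moreover have "set ?outer \<subseteq> set vs"
  proof -
    have "set ?outer = set (take (Suc i) vs) \<union> set (drop j vs)"
      using ij len by (intro set_append_tl glue) auto
    then show ?thesis
      using set_take_subset[of "Suc i" vs] set_drop_subset[of j vs] by blast
  qed
  moreover have "distinct (take i es @ drop j es)"
    using sets(3) ij by (simp add: set_take_disj_set_drop_if_distinct)
  moreover have "set (take i es @ drop j es) \<subseteq> set es"
    using set_take_subset[of i es] set_drop_subset[of j es] by auto
  moreover have "take i es @ drop j es \<noteq> []"
    using ij by simp
  ultimately show "closed_trail V E inc (?outer, take i es @ drop j es)"
    using sets unfolding closed_trail_iff by blast
qed

definition cycle_partition ::
  "'v set \<Rightarrow> 'e set \<Rightarrow> ('e \<Rightarrow> 'v set) \<Rightarrow> ('v, 'e) walk set \<Rightarrow> 'e set \<Rightarrow> bool" where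
  "cycle_partition V E inc C S \<longleftrightarrow>
     (\<forall>c\<in>C. cycle V E inc c) \<and> disjoint_family_on walk_edges C \<and> (\<Union>c\<in>C. walk_edges c) = S"

lemma closed_trail_cycle_partition:
  assumes "closed_trail V E inc W"
  shows "\<exists>C. cycle_partition V E inc C (walk_edges W)"
  using assms
proof (induction "length (snd W)" arbitrary: W rule: less_induct)
  case less
  obtain vs es where W: "W = (vs, es)"
    by fastforce
  have trail: "closed_trail V E inc (vs, es)"
    using less.prems W by simp
  then have len: "length vs = Suc (length es)" and "distinct es"
    by (auto simp: closed_trail_iff dest: walk_seq_length)
  show ?case
  proof (cases "distinct (butlast vs)")
    case True
    then have "cycle V E inc W"
      using less.prems W by (simp add: cycle_iff_closed_trail)
    then show ?thesis
      by (intro exI[of _ "{W}"]) (auto simp: cycle_partition_def disjoint_family_on_def)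
  next
    case False
    obtain i j where ij: "i < j" "j < length es" "vs ! i = vs ! j"
    proof -
      obtain a b where ab: "a < length es" "b < length es" "a \<noteq> b" "vs ! a = vs ! b"
        using False len by (auto simp: distinct_conv_nth nth_butlast)
      then show ?thesis
        using that by (metis linorder_neqE_nat)
    qed
    let ?P = "take i es" and ?Q = "drop i (take j es)" and ?R = "drop j es"
    have split: "?P @ ?Q @ ?R = es"
    proof -
      have "drop i es = take (j - i) (drop i es) @ drop (j - i) (drop i es)"
        by (rule append_take_drop_id[symmetric])
      then have "drop i es = ?Q @ ?R"
        using ij by (simp add: drop_take)
      then show ?thesis
        by (metis append_take_drop_id)
    qed
    then have "distinct (?P @ ?Q @ ?R)"
      using \<open>distinct es\<close> by simp
    then have disj: "set ?Q \<inter> set (?P @ ?R) = {}"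
      by auto
    have edges: "set es = set ?Q \<union> set (?P @ ?R)"
      by (subst split[symmetric]) auto
    have lengths: "length ?Q < length (snd W)" "length (?P @ ?R) < length (snd W)"
      using ij W by auto
    obtain CQ where CQ: "cycle_partition V E inc CQ (set ?Q)"
      using less.hyps[OF _ closed_trail_split(1)[OF trail ij]] lengths(1)
      by (auto simp: walk_edges_def)
    obtain CPR where CPR: "cycle_partition V E inc CPR (set (?P @ ?R))"
      using less.hyps[OF _ closed_trail_split(2)[OF trail ij]] lengths(2)
      by (auto simp: walk_edges_def)
    have "disjoint_family_on walk_edges (CQ \<union> CPR)"
      using CQ CPR disj by (intro disjoint_family_on_Un) (auto simp: cycle_partition_def)
    then have "cycle_partition V E inc (CQ \<union> CPR) (walk_edges W)"
      using CQ CPR W edges by (auto simp: cycle_partition_def walk_edges_def)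
    then show ?thesis ..
  qed
qed

lemma closed_trails_merge_anchor_disjoint:
  assumes "finite F" "\<forall>W\<in>F. closed_trail V E inc W" "disjoint_family_on walk_edges F"
  shows "\<exists>G. (\<forall>W\<in>G. closed_trail V E inc W) \<and> disjoint_family_on walk_edges G \<and>
    disjoint_family_on anchors G \<and> (\<Union>W\<in>G. walk_edges W) = (\<Union>W\<in>F. walk_edges W)"
  using assms
proof (induction "card F" arbitrary: F rule: less_induct)
  case less
  show ?case
  proof (cases "disjoint_family_on anchors F")
    case True
    then show ?thesis
      using less.prems by blast
  next
    case False
    then obtain X Y where XY: "X \<in> F" "Y \<in> F" "X \<noteq> Y" "anchors X \<inter> anchors Y \<noteq> {}"
      unfolding disjoint_family_on_def by blast
    then obtain Z where Z: "closed_trail V E inc Z" "walk_edges Z = walk_edges X \<union> walk_edges Y"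
      using closed_trail_merge[of V E inc X Y] less.prems(2,3) by (metis disjoint_family_onD)
    define F' where "F' = insert Z (F - {X, Y})"
    have "card F' < card F"
    proof -
      have "{X, Y} \<subseteq> F" "card {X, Y} = 2"
        using XY by auto
      then have "card (F - {X, Y}) + 2 = card F"
        using less.prems(1) card_mono[of F "{X, Y}"] by (simp add: card_Diff_subset)
      moreover have "card F' \<le> Suc (card (F - {X, Y}))"
        using less.prems(1) by (simp add: F'_def card_insert_if)
      ultimately show ?thesis
        by linarith
    qed
    moreover have "\<forall>W\<in>F'. closed_trail V E inc W"
      using less.prems(2) Z(1) by (auto simp: F'_def)
    moreover have "disjoint_family_on walk_edges F'"
      using less.prems(3) XY Z(2) unfolding F'_def disjoint_family_on_def by blast
    moreover have "(\<Union>W\<in>F'. walk_edges W) = (\<Union>W\<in>F. walk_edges W)"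
      using XY Z(2) by (auto simp: F'_def)
    ultimately show ?thesis
      using less.hyps less.prems(1) by (metis F'_def finite_Diff finite_insert)
  qed
qed

lemma euler_family_iff:
  "euler_family V E inc F \<longleftrightarrow> (\<forall>W\<in>F. closed_trail V E inc W) \<and>
     (\<Union>W\<in>F. walk_edges W) = E \<and> disjoint_family_on walk_edges F \<and> disjoint_family_on anchors F"
proof (cases "\<forall>W\<in>F. closed_trail V E inc W")
  case True
  then have "\<forall>W\<in>F. walk_edges W \<subseteq> E"
    using closed_trail_walk_edges by blast
  from unique_cover_iff_disjoint_family[OF this] show ?thesis
    unfolding euler_family_def closed_trail_def[symmetric] disjoint_family_on_def[of anchors]
    using True by blast
qed (auto simp: euler_family_def closed_trail_def)

lemma cycle_decomposition_iff_cycle_partition: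
  "cycle_decomposition V E inc F \<longleftrightarrow> cycle_partition V E inc F E"
proof (cases "\<forall>C\<in>F. cycle V E inc C")
  case True
  then have "\<forall>C\<in>F. walk_edges C \<subseteq> E"
    using closed_trail_walk_edges cycle_iff_closed_trail by blast
  from unique_cover_iff_disjoint_family[OF this] show ?thesis
    unfolding cycle_decomposition_def cycle_partition_def using True by blast
qed (auto simp: cycle_decomposition_def cycle_partition_def)

lemma euler_family_imp_cycle_decomposition:
  assumes "euler_family V E inc F"
  shows "\<exists>D. cycle_decomposition V E inc D"
proof -
  have F: "\<forall>W\<in>F. closed_trail V E inc W" "(\<Union>W\<in>F. walk_edges W) = E"
    "disjoint_family_on walk_edges F"
    using assms by (simp_all add: euler_family_iff)
  have "\<forall>W\<in>F. \<exists>C. cycle_partition V E inc C (walk_edges W)"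
    using F(1) by (intro ballI closed_trail_cycle_partition) simp
  then obtain C where C: "\<forall>W\<in>F. cycle_partition V E inc (C W) (walk_edges W)"
    by (metis bchoice)
  have "disjoint_family_on walk_edges (\<Union>W\<in>F. C W)"
    using F(3) C by (intro disjoint_family_on_UN_refine) (auto simp: cycle_partition_def)
  then have "cycle_partition V E inc (\<Union>W\<in>F. C W) E"
    using F(2) C by (auto simp: cycle_partition_def)
  then show ?thesis
    unfolding cycle_decomposition_iff_cycle_partition ..
qed

lemma finite_edge_disjoint_closed_trails:
  assumes "finite E" "\<forall>W\<in>F. closed_trail V E inc W" "disjoint_family_on walk_edges F"
  shows "finite F"
proof (rule ccontr)
  assume "infinite F"
  moreover have "\<And>W. W \<in> F \<Longrightarrow> walk_edges W \<noteq> {}"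
    using assms(2) closed_trail_walk_edges by blast
  ultimately have "infinite (\<Union>W\<in>F. walk_edges W)"
    using infinite_disjoint_family_imp_infinite_UNION[of F walk_edges] assms(3) by blast
  moreover have "(\<Union>W\<in>F. walk_edges W) \<subseteq> E"
    using assms(2) closed_trail_walk_edges by blast
  ultimately show False
    using assms(1) finite_subset by blast
qed

lemma cycle_decomposition_imp_euler_family:
  assumes "finite E" "cycle_decomposition V E inc F"
  shows "\<exists>G. euler_family V E inc G"
proof -
  have F: "\<forall>W\<in>F. closed_trail V E inc W" "(\<Union>W\<in>F. walk_edges W) = E"
    "disjoint_family_on walk_edges F"
    using assms(2)
    by (simp_all add: cycle_decomposition_iff_cycle_partition cycle_partition_def cycle_iff_closed_trail)
  then have "finite F"
    using assms(1) finite_edge_disjoint_closed_trails by blast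
  then obtain G where "\<forall>W\<in>G. closed_trail V E inc W" "disjoint_family_on walk_edges G"
    "disjoint_family_on anchors G" "(\<Union>W\<in>G. walk_edges W) = E"
    using closed_trails_merge_anchor_disjoint[OF \<open>finite F\<close> F(1,3)] F(2) by auto
  then show ?thesis
    by (auto simp: euler_family_iff)
qed

theorem theorem2p41:
  fixes V :: "'v set" and E :: "'e set" and inc :: "'e \<Rightarrow> 'v set"
  assumes "hypergraph V E inc"
  shows "quasi_eulerian V E inc \<longleftrightarrow> (\<exists>F. cycle_decomposition V E inc F)"
proof
  assume "quasi_eulerian V E inc"
  then obtain F where "euler_family V E inc F"
    unfolding quasi_eulerian_def ..
  then show "\<exists>F. cycle_decomposition V E inc F"
    by (rule euler_family_imp_cycle_decomposition)
next
  assume "\<exists>F. cycle_decomposition V E inc F"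
  then obtain F where "cycle_decomposition V E inc F" ..
  moreover have "finite E"
    using assms by (simp add: hypergraph_def)
  ultimately show "quasi_eulerian V E inc"
    unfolding quasi_eulerian_def by (intro cycle_decomposition_imp_euler_family)
qed

end
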